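(* Let $\mathbf{P}=\{p_n(x)\}_{n\ge0}$ be a sequence of complex polynomials with $\deg p_n=n$, $p_0=1$, and let $\bar{\mathbf{P}}=\{\bar p_n(x)\}$ with $\bar p_0(x)=1$, $\bar p_n(x)=xp_{n-1}(x)$ for $n\ge1$. Then for $n\ge2$ and $1\le k\le n-1$, $$A_{n,k}(\bar{\mathbf{P}})=(k+1)A_{n-1,k}(\mathbf{P})+(n-k)A_{n-1,k-1}(\mathbf{P}),$$ and for $n\ge1$, $A_{n,0}(\bar{\mathbf{P}})=\bar p_n(1)=A_{n-1,0}(\mathbf{P})=p_{n-1}(1)$.
   Context: For any sequence $\mathbf{Q}=\{q_n\}$ with $\deg q_n=n$, $q_0=1$, the Eulerian numbers $A_{n,k}(\mathbf{Q})$ ($0\le k\le n$) are the unique coefficients with $q_n(x)=\sum_{k=0}^{n}A_{n,k}(\mathbf{Q})\binom{x+n-k-1}{n}$, where $\binom{y}{n}=y(y-1)\cdots(y-n+1)/n!$. *)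

theory Defs
  imports "HOL-Computational_Algebra.Polynomial"
begin

definition binom_poly :: "complex \<Rightarrow> nat \<Rightarrow> complex poly" where
  "binom_poly c n = smult (1 / of_nat (fact n)) (\<Prod>i<n. [:c - of_nat i, 1:])"

definition eulerian_num :: "(nat \<Rightarrow> complex poly) \<Rightarrow> nat \<Rightarrow> nat \<Rightarrow> complex" where
  "eulerian_num Q n k =
     (THE a :: nat \<Rightarrow> complex. (\<forall>j>n. a j = 0) \<and>
        Q n = (\<Sum>j\<le>n. smult (a j) (binom_poly (of_nat n - of_nat j - 1) n))) k"

definition bar_seq :: "(nat \<Rightarrow> complex poly) \<Rightarrow> nat \<Rightarrow> complex poly" where
  "bar_seq P n = (if n = 0 then 1 else [:0, 1:] * P (n - 1))"

end

theory Submission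
  imports Defs
begin

text \<open>The basis polynomial B_{n,j} = binom(x+n-j-1, n) vanishes at x = 1, ..., j and equals 1 at
  x = j + 1. The expansion of a polynomial of degree at most n in the B_{n,j} is therefore
  triangular with respect to evaluation at 1, ..., n + 1, which gives existence and uniqueness of
  the Eulerian numbers and A_{n,0}(Q) = q_n(1). The recurrence comes from the identity
  x B_{m,j} = (j+1) B_{m+1,j} + (m-j) B_{m+1,j+1}: multiplying the expansion of p_{n-1} by x
  and regrouping gives the expansion of x p_{n-1}.\<close>

definition eulerian_basis :: "nat \<Rightarrow> nat \<Rightarrow> complex poly" where
  "eulerian_basis n j = binom_poly (of_nat n - of_nat j - 1) n"

definition eulerian_comb :: "nat \<Rightarrow> (nat \<Rightarrow> complex) \<Rightarrow> complex poly" where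
  "eulerian_comb n a = (\<Sum>j\<le>n. smult (a j) (eulerian_basis n j))"

lemma poly_eulerian_basis_below:
  assumes "t < j" "j \<le> n"
  shows "poly (eulerian_basis n j) (of_nat (Suc t)) = 0"
proof -
  define i where "i = n + t - j"
  have "i < n" using assms unfolding i_def by auto
  moreover have "of_nat i = (of_nat n + of_nat t - of_nat j :: complex)"
    using assms unfolding i_def by (simp add: of_nat_diff)
  ultimately have "(\<Prod>i<n. poly [:of_nat n - of_nat j - 1 - of_nat i, 1:] (of_nat (Suc t))) = (0::complex)"
    by (intro prod_zero bexI[of _ i]) auto
  thus ?thesis unfolding eulerian_basis_def binom_poly_def by (simp add: poly_prod)
qed

lemma poly_eulerian_basis_diag: "poly (eulerian_basis n t) (of_nat (Suc t)) = 1"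
proof -
  have "(\<Prod>i<n. poly [:of_nat n - of_nat t - 1 - of_nat i, 1:] (of_nat (Suc t)))
      = (\<Prod>i<n. (of_nat (n - i) :: complex))"
    by (intro prod.cong) (auto simp: of_nat_diff)
  also have "\<dots> = fact n"
    unfolding fact_prod_rev by (simp add: atLeast0LessThan)
  finally show ?thesis unfolding eulerian_basis_def binom_poly_def by (simp add: poly_prod)
qed

lemma degree_eulerian_basis: "degree (eulerian_basis n j) \<le> n"
proof -
  have "degree (\<Prod>i<n. [:of_nat n - of_nat j - 1 - of_nat i, 1:] :: complex poly) \<le> n"
    using degree_prod_sum_le[of "{..<n}" "\<lambda>i. [:of_nat n - of_nat j - 1 - of_nat i, 1:] :: complex poly"]
    by simp
  thus ?thesis unfolding eulerian_basis_def binom_poly_def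
    using degree_smult_le order_trans by blast
qed

lemma degree_eulerian_comb: "degree (eulerian_comb n a) \<le> n"
  unfolding eulerian_comb_def
  by (rule degree_sum_le) (simp, meson degree_eulerian_basis degree_smult_le order_trans)

lemma poly_eulerian_comb_first:
  assumes "\<forall>j<t. a j = 0" "t \<le> n"
  shows "poly (eulerian_comb n a) (of_nat (Suc t)) = a t"
proof -
  have "poly (eulerian_comb n a) (of_nat (Suc t))
      = (\<Sum>j\<le>n. a j * poly (eulerian_basis n j) (of_nat (Suc t)))"
    unfolding eulerian_comb_def by (simp add: poly_sum)
  also have "\<dots> = (\<Sum>j\<in>{t}. a j * poly (eulerian_basis n j) (of_nat (Suc t)))"
    using assms by (intro sum.mono_neutral_right)
      (auto simp del: of_nat_Suc dest!: poly_eulerian_basis_below dest: linorder_neqE_nat)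
  also have "\<dots> = a t" by (simp del: of_nat_Suc add: poly_eulerian_basis_diag)
  finally show ?thesis .
qed

lemma eulerian_comb_diff: "eulerian_comb n a - eulerian_comb n b = eulerian_comb n (\<lambda>j. a j - b j)"
  unfolding eulerian_comb_def by (simp add: sum_subtractf[symmetric] smult_diff_left)

lemma eulerian_comb_eq_0_imp:
  assumes "eulerian_comb n a = 0" "j \<le> n"
  shows "a j = 0"
proof -
  have "\<forall>j<t. a j = 0" if "t \<le> Suc n" for t
    using that
  proof (induction t)
    case (Suc t)
    then have below: "\<forall>j<t. a j = 0" by simp
    have "a t = poly (eulerian_comb n a) (of_nat (Suc t))"
      using poly_eulerian_comb_first[OF below] Suc.prems by simp
    hence "a t = 0" using assms(1) by simp
    with below show ?case using less_Suc_eq by auto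
  qed simp
  thus ?thesis using assms(2) by auto
qed

lemma eulerian_comb_inj:
  assumes "\<forall>j>n. a j = 0" "\<forall>j>n. b j = 0" "eulerian_comb n a = eulerian_comb n b"
  shows "a = b"
proof
  fix j
  show "a j = b j"
  proof (cases "j \<le> n")
    case True
    thus ?thesis using eulerian_comb_eq_0_imp[of n "\<lambda>j. a j - b j" j] assms(3)
      by (simp add: eulerian_comb_diff[symmetric])
  qed (use assms(1,2) in auto)
qed

text \<open>Coefficients are added one at a time: adding a multiple of B_{n,t} does not disturb the
  values at 1, ..., t.\<close>
lemma eulerian_comb_interpolates:
  assumes "t \<le> Suc n"
  shows "\<exists>a. (\<forall>j\<ge>t. a j = 0) \<and>
             (\<forall>s<t. poly (eulerian_comb n a) (of_nat (Suc s)) = poly Q (of_nat (Suc s)))"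
  using assms
proof (induction t)
  case 0
  show ?case by (intro exI[of _ "\<lambda>_. 0"]) auto
next
  case (Suc t)
  then obtain a where zero: "\<forall>j\<ge>t. a j = 0"
    and interp: "\<forall>s<t. poly (eulerian_comb n a) (of_nat (Suc s)) = poly Q (of_nat (Suc s))"
    by auto
  have "t \<le> n" using Suc.prems by simp
  define d where "d = poly Q (of_nat (Suc t)) - poly (eulerian_comb n a) (of_nat (Suc t))"
  define a' where "a' = a(t := d)"
  have "eulerian_comb n a' - eulerian_comb n a = (\<Sum>j\<in>{t}. smult (a' j - a j) (eulerian_basis n j))"
    unfolding eulerian_comb_diff unfolding eulerian_comb_def
    using \<open>t \<le> n\<close> by (intro sum.mono_neutral_right) (auto simp: a'_def)
  also have "\<dots> = smult d (eulerian_basis n t)" using zero by (simp add: a'_def)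
  finally have a': "eulerian_comb n a' = eulerian_comb n a + smult d (eulerian_basis n t)"
    by (simp add: algebra_simps)
  have "poly (eulerian_comb n a') (of_nat (Suc s)) = poly Q (of_nat (Suc s))" if "s < Suc t" for s
  proof (cases "s = t")
    case True
    thus ?thesis by (simp del: of_nat_Suc add: a' d_def poly_eulerian_basis_diag)
  next
    case False
    with that have "s < t" by simp
    thus ?thesis using interp \<open>t \<le> n\<close>
      by (simp del: of_nat_Suc add: a' poly_eulerian_basis_below)
  qed
  moreover have "\<forall>j\<ge>Suc t. a' j = 0" using zero by (simp add: a'_def)
  ultimately show ?case by blast
qed

lemma exists_eulerian_comb:
  assumes "degree Q \<le> n"
  shows "\<exists>a. (\<forall>j>n. a j = 0) \<and> Q = eulerian_comb n a"
proof -
  obtain a where zero: "\<forall>j\<ge>Suc n. a j = 0"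
    and interp: "\<forall>s<Suc n. poly (eulerian_comb n a) (of_nat (Suc s)) = poly Q (of_nat (Suc s))"
    using eulerian_comb_interpolates[of "Suc n" n Q] by auto
  define X :: "complex set" where "X = (\<lambda>s. of_nat (Suc s)) ` {..<Suc n}"
  have "card X = Suc n"
    unfolding X_def by (subst card_image) (auto simp: inj_on_def)
  hence "eulerian_comb n a = Q"
    using interp degree_eulerian_comb[of n a] assms
    by (intro poly_eqI_degree[of X]) (auto simp: X_def)
  thus ?thesis using zero by (intro exI[of _ a]) auto
qed

lemma eulerian_num_eqI:
  assumes "\<forall>j>n. a j = 0" "Q n = eulerian_comb n a"
  shows "eulerian_num Q n = a"
proof -
  have "(THE a. (\<forall>j>n. a j = 0) \<and> Q n = eulerian_comb n a) = a"
    using assms by (intro the_equality) (auto intro: eulerian_comb_inj)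
  thus ?thesis unfolding eulerian_num_def eulerian_comb_def eulerian_basis_def by simp
qed

lemma eulerian_num_expansion:
  assumes "degree (Q n) \<le> n"
  shows "\<forall>j>n. eulerian_num Q n j = 0" "Q n = eulerian_comb n (eulerian_num Q n)"
  using exists_eulerian_comb[OF assms] eulerian_num_eqI[of n _ Q] by auto

lemma eulerian_num_0:
  assumes "degree (Q n) \<le> n"
  shows "eulerian_num Q n 0 = poly (Q n) 1"
  using poly_eulerian_comb_first[of 0 "eulerian_num Q n" n] eulerian_num_expansion(2)[of Q n, OF assms]
  by simp

lemma x_mult_eulerian_basis:
  assumes "j \<le> m"
  shows "[:0, 1:] * eulerian_basis m j
       = smult (of_nat j + 1) (eulerian_basis (Suc m) j)
       + smult (of_nat (m - j)) (eulerian_basis (Suc m) (Suc j))"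
proof -
  define c :: complex where "c = of_nat m - of_nat j - 1"
  define R where "R = (\<Prod>i<m. [:c - of_nat i, 1:])"
  have basis_m: "eulerian_basis m j = smult (1 / fact m) R"
    unfolding eulerian_basis_def binom_poly_def R_def c_def by simp
  have basis_Suc_m: "eulerian_basis (Suc m) j = smult (1 / fact (Suc m)) ([:c + 1, 1:] * R)"
    unfolding eulerian_basis_def binom_poly_def R_def c_def
    by (subst prod.lessThan_Suc_shift) (simp add: algebra_simps)
  have basis_Suc_Suc_j: "eulerian_basis (Suc m) (Suc j) = smult (1 / fact (Suc m)) ([:c - of_nat m, 1:] * R)"
    unfolding eulerian_basis_def binom_poly_def R_def c_def by (simp add: algebra_simps)
  have factors_combine: "smult (of_nat j + 1) [:c + 1, 1:] + smult (of_nat (m - j)) [:c - of_nat m, 1:]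
              = smult (of_nat (Suc m)) [:0, 1:]"
    using assms by (simp add: c_def of_nat_diff algebra_simps)
  have regroup: "smult a (smult f (X * R)) + smult b (smult f (Y * R))
                = smult f ((smult a X + smult b Y) * R)" for a b f :: complex and X Y
    by (simp add: distrib_right smult_add_right mult.commute[of a f] mult.commute[of b f])
  have "smult (of_nat j + 1) (eulerian_basis (Suc m) j)
      + smult (of_nat (m - j)) (eulerian_basis (Suc m) (Suc j))
      = smult (1 / fact (Suc m))
          ((smult (of_nat j + 1) [:c + 1, 1:] + smult (of_nat (m - j)) [:c - of_nat m, 1:]) * R)"
    unfolding basis_Suc_m basis_Suc_Suc_j by (rule regroup)
  also have "\<dots> = [:0, 1:] * eulerian_basis m j"
    unfolding factors_combine basis_m fact_Suc by (simp del: of_nat_Suc)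
  finally show ?thesis by simp
qed

lemma eulerian_num_bar_seq_Suc:
  assumes "degree (P m) \<le> m"
  shows "eulerian_num (bar_seq P) (Suc m) k =
           (of_nat k + 1) * eulerian_num P m k
         + (if k = 0 then 0 else of_nat (Suc m - k) * eulerian_num P m (k - 1))"
proof -
  define a where "a = eulerian_num P m"
  have zero: "\<forall>j>m. a j = 0" and expansion: "P m = eulerian_comb m a"
    using eulerian_num_expansion[of P m, OF assms] by (simp_all add: a_def)
  define b where "b k = (of_nat k + 1) * a k + (if k = 0 then 0 else of_nat (Suc m - k) * a (k - 1))"
    for k
  have "bar_seq P (Suc m) = (\<Sum>j\<le>m. [:0, 1:] * smult (a j) (eulerian_basis m j))"
    by (simp add: bar_seq_def expansion eulerian_comb_def sum_distrib_left)
  also have "\<dots> = (\<Sum>j\<le>m. smult ((of_nat j + 1) * a j) (eulerian_basis (Suc m) j)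
                         + smult (of_nat (m - j) * a j) (eulerian_basis (Suc m) (Suc j)))"
    by (intro sum.cong refl, subst mult_smult_right, subst x_mult_eulerian_basis)
      (simp_all add: smult_add_right mult.commute)
  also have "\<dots> = (\<Sum>j\<le>m. smult ((of_nat j + 1) * a j) (eulerian_basis (Suc m) j))
                + (\<Sum>j\<le>m. smult (of_nat (m - j) * a j) (eulerian_basis (Suc m) (Suc j)))"
    by (rule sum.distrib)
  also have "\<dots> = (\<Sum>j\<le>Suc m. smult ((of_nat j + 1) * a j) (eulerian_basis (Suc m) j))
                + (\<Sum>j\<le>Suc m. smult (if j = 0 then 0 else of_nat (Suc m - j) * a (j - 1))
                                     (eulerian_basis (Suc m) j))"
    using zero by (subst (2) sum.atMost_Suc_shift) simp
  also have "\<dots> = eulerian_comb (Suc m) b"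
    unfolding eulerian_comb_def b_def by (simp add: sum.distrib[symmetric] smult_add_left)
  finally have "eulerian_num (bar_seq P) (Suc m) = b"
    using zero by (intro eulerian_num_eqI) (auto simp: b_def)
  thus ?thesis by (simp add: b_def a_def)
qed

theorem theorem3p3:
  fixes P :: "nat \<Rightarrow> complex poly"
  assumes deg: "\<And>n. degree (P n) = n"
    and P0: "P 0 = 1"
  shows "(\<forall>n k. n \<ge> 2 \<and> 1 \<le> k \<and> k \<le> n - 1 \<longrightarrow>
            eulerian_num (bar_seq P) n k =
              (of_nat k + 1) * eulerian_num P (n - 1) k
              + of_nat (n - k) * eulerian_num P (n - 1) (k - 1))
       \<and> (\<forall>n \<ge> 1.
            eulerian_num (bar_seq P) n 0 = poly (bar_seq P n) 1
          \<and> poly (bar_seq P n) 1 = eulerian_num P (n - 1) 0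
          \<and> eulerian_num P (n - 1) 0 = poly (P (n - 1)) 1)"
proof (intro conjI allI impI)
  fix n k :: nat
  assume "2 \<le> n \<and> 1 \<le> k \<and> k \<le> n - 1"
  then obtain m where "n = Suc m" "k \<noteq> 0" by (cases n) auto
  thus "eulerian_num (bar_seq P) n k =
          (of_nat k + 1) * eulerian_num P (n - 1) k + of_nat (n - k) * eulerian_num P (n - 1) (k - 1)"
    using eulerian_num_bar_seq_Suc[of P m k] deg[of m] by simp
next
  fix n :: nat
  assume "1 \<le> n"
  then obtain m where n: "n = Suc m" by (cases n) auto
  have "degree (bar_seq P n) \<le> n"
    using degree_mult_le[of "[:0, 1:]" "P m"] deg[of m] by (simp add: n bar_seq_def)
  thus "eulerian_num (bar_seq P) n 0 = poly (bar_seq P n) 1"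
    by (rule eulerian_num_0)
  show "poly (bar_seq P n) 1 = eulerian_num P (n - 1) 0"
    and "eulerian_num P (n - 1) 0 = poly (P (n - 1)) 1"
    using eulerian_num_0[of P m] deg[of m] by (simp_all add: n bar_seq_def)
qed

end
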